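(* Let $X=[0,1]^d$, let $Y$ be a finite-dimensional normed space, and let $\mathcal{M}\subset X$ be a compact smooth embedded manifold of dimension $m$ with volume measure $dVol$. There exists $r>0$ depending only on $\mathcal{M}$ such that for every Lipschitz $u:X\to Y$ with Lipschitz constant $L$: if $\|u\|_{L^\infty(\mathcal{M},Y)}\le Lr$ then $$\|u\|_{L^\infty(\mathcal{M},Y)}^{m+2}\le\frac{(m+2)(m+1)}{\alpha(m)}L^m\|u\|_{L^2(\mathcal{M},Y)}^2,$$ and if $\|u\|_{L^\infty(\mathcal{M},Y)}\ge Lr$ then $$\|u\|_{L^\infty(\mathcal{M},Y)}^{2}\le\frac{2^{m+1}(m+1)}{\alpha(m)r^m}\|u\|_{L^2(\mathcal{M},Y)}^2,$$ where $\alpha(m)$ is the volume of the unit ball in $\mathbb{R}^m$.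
   Context: $\|u\|_{L^2(\mathcal{M},Y)}^2=\int_{\mathcal{M}}\|u(x)\|_Y^2\,dVol(x)$ and $\|u\|_{L^\infty(\mathcal{M},Y)}=\sup_{x\in\mathcal{M}}\|u(x)\|_Y$. *)

theory Defs
  imports "HOL-Analysis.Analysis"
begin

fun iter_deriv :: "('a::real_normed_vector \<Rightarrow> 'b::real_normed_vector) \<Rightarrow> 'a list \<Rightarrow> 'a \<Rightarrow> 'b" where
  "iter_deriv f [] = f"
| "iter_deriv f (v # vs) = (\<lambda>x. frechet_derivative (iter_deriv f vs) (at x) v)"

definition smooth_on :: "'a::real_normed_vector set \<Rightarrow> ('a \<Rightarrow> 'b::real_normed_vector) \<Rightarrow> bool" where
  "smooth_on V f \<longleftrightarrow> (\<forall>vs. \<forall>x\<in>V. iter_deriv f vs differentiable (at x))"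

definition local_param :: "(real^'n) set \<Rightarrow> (real^'m) set \<Rightarrow> (real^'m \<Rightarrow> real^'n) \<Rightarrow> bool" where
  "local_param M V \<phi> \<longleftrightarrow> open V \<and> smooth_on V \<phi> \<and>
     (\<forall>x\<in>V. inj (frechet_derivative \<phi> (at x))) \<and>
     (\<exists>U \<psi>. open U \<and> homeomorphism V (M \<inter> U) \<phi> \<psi>)"

text \<open>M is a smooth embedded submanifold of R^d of dimension m = CARD('m).\<close>
definition smooth_submanifold :: "(real^'n) set \<Rightarrow> 'm::finite itself \<Rightarrow> bool" where
  "smooth_submanifold M (_::'m itself) \<longleftrightarrow>
     (\<forall>p\<in>M. \<exists>(V::(real^'m) set) \<phi>. local_param M V \<phi> \<and> p \<in> \<phi> ` V)"

definition param_jacobian :: "(real^'m \<Rightarrow> real^'n) \<Rightarrow> real^'m \<Rightarrow> real" where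
  "param_jacobian \<phi> x = sqrt (det (transpose (matrix (frechet_derivative \<phi> (at x))) **
                                    matrix (frechet_derivative \<phi> (at x))))"

text \<open>Vol is the Riemannian volume measure of the m-dimensional submanifold M: a measure on the
  Borel subsets of M which, on every chart domain, is given by the area formula.
  (This characterizes the volume measure uniquely.)\<close>
definition is_volume_measure :: "(real^'n) set \<Rightarrow> 'm::finite itself \<Rightarrow> (real^'n) measure \<Rightarrow> bool" where
  "is_volume_measure M (_::'m itself) Vol \<longleftrightarrow>
     space Vol = M \<and> sets Vol = sets (restrict_space borel M) \<and>
     (\<forall>(V::(real^'m) set) \<phi> A. local_param M V \<phi> \<longrightarrow> A \<in> sets Vol \<longrightarrow> A \<subseteq> \<phi> ` V \<longrightarrow>
        emeasure Vol A = (\<integral>\<^sup>+ x. indicator (V \<inter> \<phi> -` A) x * ennreal (param_jacobian \<phi> x) \<partial>lborel))"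

definition unit_ball_volume :: "'m::finite itself \<Rightarrow> real" where
  "unit_ball_volume (_::'m itself) = measure lborel (ball (0::real^'m) 1)"

end

theory Submission
  imports Defs
begin

text \<open>
  Let \<open>|u|\<close> attain its maximum \<open>S\<close> on \<open>M\<close> at \<open>x\<^sub>0\<close>. Since \<open>u\<close> is \<open>L\<close>-Lipschitz, \<open>|u| \<ge> S - L d(\<cdot>, x\<^sub>0)\<close>,
  so \<open>\<parallel>u\<parallel>\<^sub>2\<^sup>2\<close> dominates the integral of the cone \<open>(S - L d(\<cdot>, x\<^sub>0))\<^sub>+\<^sup>2\<close>, which by the layer-cake formula is
  \<open>\<integral>\<^sub>0\<^sup>S 2 (S - z) Vol(M \<inter> B(x\<^sub>0, z / L)) dz\<close>. On a compact submanifold every small ball satisfies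
  \<open>Vol(M \<inter> B(x, \<rho>)) \<ge> \<alpha>(m) \<rho>\<^sup>m / 2\<close> for \<open>\<rho> \<le> r\<close>: near the centre of a chart whose differential there
  is an isometry, the chart is \<open>(1 + \<kappa>)\<close>-Lipschitz with Jacobian at least \<open>3/4\<close>, so it maps a Euclidean
  ball of radius \<open>(1 - \<kappa>) \<rho>\<close> into \<open>M \<inter> B(x, \<rho>)\<close>, and compactness makes the radius uniform.
  For \<open>S \<le> L r\<close> the cone integral is then at least \<open>\<alpha>(m) S\<^sup>m\<^sup>+\<^sup>2 / ((m + 1) (m + 2) L\<^sup>m)\<close>; for
  \<open>S \<ge> L r\<close> the same bound applies with \<open>L\<close> replaced by \<open>S / r\<close>.
\<close>

section \<open>Sup norm versus \<open>L\<^sup>2\<close> norm under a lower volume bound\<close>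

lemma has_integral_tent_power:
  fixes S :: real
  assumes "0 \<le> S"
  shows "((\<lambda>z. 2 * (S - z) * z ^ m) has_integral 2 * S ^ (m + 2) / ((real m + 1) * (real m + 2))) {0..S}"
proof -
  have nonzero: "real m + 1 \<noteq> 0" "real m + 2 \<noteq> 0" by linarith+
  define F where "F z = 2 * S / (real m + 1) * z ^ (m + 1) - 2 / (real m + 2) * z ^ (m + 2)" for z :: real
  have "((\<lambda>z. 2 * (S - z) * z ^ m) has_integral F S - F 0) {0..S}"
  proof (rule fundamental_theorem_of_calculus)
    fix x :: real
    have "((\<lambda>z. z ^ (m + 1)) has_real_derivative (real m + 1) * x ^ m) (at x within {0..S})"
      using DERIV_pow[of "m + 1" x "{0..S}"] by (simp add: add.commute)
    moreover have "((\<lambda>z. z ^ (m + 2)) has_real_derivative (real m + 2) * x ^ (m + 1)) (at x within {0..S})"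
      using DERIV_pow[of "m + 2" x "{0..S}"] by (simp add: numeral_2_eq_2 add.commute)
    ultimately have "(F has_real_derivative 2 * S / (real m + 1) * ((real m + 1) * x ^ m)
        - 2 / (real m + 2) * ((real m + 2) * x ^ (m + 1))) (at x within {0..S})"
      unfolding F_def by (intro DERIV_diff DERIV_cmult)
    moreover have "2 * S / (real m + 1) * ((real m + 1) * x ^ m) = 2 * S * x ^ m"
      and "2 / (real m + 2) * ((real m + 2) * x ^ (m + 1)) = 2 * x * x ^ m"
      using nonzero by simp_all
    ultimately show "(F has_vector_derivative 2 * (S - x) * x ^ m) (at x within {0..S})"
      by (simp add: has_real_derivative_iff_has_vector_derivative algebra_simps)
  qed (use assms in auto)
  moreover have "F S - F 0 = 2 * S ^ (m + 2) / ((real m + 1) * (real m + 2))"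
  proof -
    have "F S = 2 * S ^ (m + 2) * (1 / (real m + 1) - 1 / (real m + 2))"
      unfolding F_def by (simp add: algebra_simps power_Suc)
    also have "\<dots> = 2 * S ^ (m + 2) / ((real m + 1) * (real m + 2))"
      using nonzero by (simp add: field_simps)
    finally show ?thesis by (simp add: F_def)
  qed
  ultimately show ?thesis by simp
qed

lemma has_integral_tent:
  fixes S c :: real
  assumes "c \<le> S"
  shows "((\<lambda>z. 2 * (S - z)) has_integral (S - c)\<^sup>2) {c..S}"
proof -
  have "((\<lambda>z. 2 * (S - z)) has_integral (- (S - S)\<^sup>2) - (- (S - c)\<^sup>2)) {c..S}"
  proof (rule fundamental_theorem_of_calculus)
    fix x :: real
    have "((\<lambda>z. - (S - z)\<^sup>2) has_real_derivative 2 * (S - x)) (at x within {c..S})"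
      by (auto intro!: derivative_eq_intros simp: algebra_simps)
    then show "((\<lambda>z. - (S - z)\<^sup>2) has_vector_derivative 2 * (S - x)) (at x within {c..S})"
      by (simp add: has_real_derivative_iff_has_vector_derivative)
  qed (use assms in auto)
  then show ?thesis by simp
qed

lemma nn_integral_lborel_tent:
  fixes a S :: real
  shows "(\<integral>\<^sup>+ z. ennreal (if a \<le> z \<and> z \<le> S then 2 * (S - z) else 0) \<partial>lborel) = ennreal ((max 0 (S - a))\<^sup>2)"
proof (cases "a \<le> S")
  case True
  have "(\<integral>\<^sup>+ z. ennreal (if a \<le> z \<and> z \<le> S then 2 * (S - z) else 0) \<partial>lborel)
      = (\<integral>\<^sup>+ z. ennreal (indicator {a..S} z * (2 * (S - z))) \<partial>lborel)"
    by (intro nn_integral_cong) (auto simp: indicator_def)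
  also have "\<dots> = ennreal ((S - a)\<^sup>2)"
    by (rule nn_integral_has_integral_lebesgue) (use True has_integral_tent in auto)
  finally show ?thesis
    using True by simp
next
  case False
  then have "(if a \<le> z \<and> z \<le> S then 2 * (S - z) else 0) = 0" for z
    by auto
  then show ?thesis
    using False by simp
qed

lemma measurable_continuous_on_restrict_sets:
  assumes "sets Vol = sets (restrict_space borel M)" and "continuous_on M f"
  shows "f \<in> borel_measurable Vol"
  using borel_measurable_continuous_on_restrict[OF assms(2)] measurable_cong_sets[OF assms(1) refl]
  by blast

definition lower_volume_growth :: "'a::metric_space measure \<Rightarrow> 'a set \<Rightarrow> real \<Rightarrow> nat \<Rightarrow> real \<Rightarrow> bool" where
  "lower_volume_growth Vol A c m r \<longleftrightarrow>
     (\<forall>x\<in>A. \<forall>\<rho>. 0 < \<rho> \<and> \<rho> \<le> r \<longrightarrow> ennreal (c * \<rho> ^ m) \<le> emeasure Vol (space Vol \<inter> cball x \<rho>))"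

text \<open>Layer-cake argument: \<open>(S - L d(y))\<^sub>+\<^sup>2 = \<integral>\<^bsub>L d(y)\<^esub>\<^bsup>S\<^esup> 2 (S - z) dz\<close>; after exchanging the
  integrals, the inner one is \<open>2 (S - z)\<close> times the measure of the ball of radius \<open>z / L\<close> around \<open>x\<^sub>0\<close>.\<close>

lemma nn_integral_cone_ge:
  fixes Vol :: "'a::metric_space measure"
  assumes "sigma_finite_measure Vol" and sets: "sets Vol = sets (restrict_space borel M)"
    and growth: "lower_volume_growth Vol M c m r" and "0 < c" "0 < m"
    and "x\<^sub>0 \<in> M" "0 < L" "0 \<le> S" "S \<le> L * r"
  shows "ennreal (c / L ^ m * (2 * S ^ (m + 2) / ((real m + 1) * (real m + 2))))
           \<le> (\<integral>\<^sup>+ y. ennreal ((max 0 (S - L * dist y x\<^sub>0))\<^sup>2) \<partial>Vol)"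
proof -
  interpret pair_sigma_finite Vol lborel
    by (simp add: pair_sigma_finite_def assms(1) sigma_finite_lborel)
  have space: "space Vol = M"
    using sets_eq_imp_space_eq[OF sets] by (simp add: space_restrict_space)
  define h where "h y z = ennreal (if L * dist y x\<^sub>0 \<le> z \<and> z \<le> S then 2 * (S - z) else 0)" for y z
  have [measurable]: "(\<lambda>y. dist y x\<^sub>0) \<in> borel_measurable Vol"
    by (intro measurable_continuous_on_restrict_sets[OF sets] continuous_intros)
  have h_measurable: "case_prod h \<in> borel_measurable (Vol \<Otimes>\<^sub>M lborel)"
    unfolding h_def by measurable
  have inner_z: "(\<integral>\<^sup>+ z. h y z \<partial>lborel) = ennreal ((max 0 (S - L * dist y x\<^sub>0))\<^sup>2)" for y
    unfolding h_def by (rule nn_integral_lborel_tent)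
  have inner_y: "ennreal (indicator {0..S} z * (c / L ^ m * (2 * (S - z) * z ^ m))) \<le> (\<integral>\<^sup>+ y. h y z \<partial>Vol)" for z
  proof (cases "0 < z \<and> z \<le> S")
    case True
    have "ennreal (indicator {0..S} z * (c / L ^ m * (2 * (S - z) * z ^ m)))
        = ennreal (2 * (S - z)) * ennreal (c * (z / L) ^ m)"
      using True \<open>0 < c\<close> \<open>0 < L\<close>
      by (subst ennreal_mult[symmetric]) (auto simp: power_divide algebra_simps)
    also have "\<dots> \<le> ennreal (2 * (S - z)) * emeasure Vol (M \<inter> cball x\<^sub>0 (z / L))"
    proof (intro mult_left_mono)
      have "z / L \<le> r"
        using True \<open>0 < L\<close> \<open>S \<le> L * r\<close> by (simp add: field_simps)
      then show "ennreal (c * (z / L) ^ m) \<le> emeasure Vol (M \<inter> cball x\<^sub>0 (z / L))"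
        using growth \<open>x\<^sub>0 \<in> M\<close> True \<open>0 < L\<close> unfolding lower_volume_growth_def space by simp
    qed simp
    also have "\<dots> = (\<integral>\<^sup>+ y. ennreal (2 * (S - z)) * indicator (M \<inter> cball x\<^sub>0 (z / L)) y \<partial>Vol)"
      by (rule nn_integral_cmult_indicator[symmetric]) (auto simp: sets sets_restrict_space)
    also have "\<dots> = (\<integral>\<^sup>+ y. h y z \<partial>Vol)"
      using True \<open>0 < L\<close> by (intro nn_integral_cong) (auto simp: h_def space indicator_def dist_commute field_simps)
    finally show ?thesis .
  next
    case False
    then show ?thesis using \<open>0 < m\<close> by (auto simp: indicator_def power_0_left)
  qed
  have "ennreal (c / L ^ m * (2 * S ^ (m + 2) / ((real m + 1) * (real m + 2))))
      = (\<integral>\<^sup>+ z. ennreal (indicator {0..S} z * (c / L ^ m * (2 * (S - z) * z ^ m))) \<partial>lborel)"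
    using \<open>0 < c\<close> \<open>0 < L\<close> \<open>0 \<le> S\<close>
    by (intro nn_integral_has_integral_lebesgue[symmetric] has_integral_mult_right has_integral_tent_power) auto
  also have "\<dots> \<le> (\<integral>\<^sup>+ z. (\<integral>\<^sup>+ y. h y z \<partial>Vol) \<partial>lborel)"
    by (intro nn_integral_mono inner_y)
  also have "\<dots> = (\<integral>\<^sup>+ y. (\<integral>\<^sup>+ z. h y z \<partial>lborel) \<partial>Vol)"
    by (rule Fubini'[OF h_measurable])
  finally show ?thesis
    by (simp add: inner_z)
qed

lemma continuous_on_norm_attains_Sup:
  fixes u :: "'a::topological_space \<Rightarrow> 'b::real_normed_vector"
  assumes "compact M" "M \<noteq> {}" "continuous_on M u"
  obtains x\<^sub>0 where "x\<^sub>0 \<in> M" "(SUP x\<in>M. norm (u x)) = norm (u x\<^sub>0)" "\<And>x. x \<in> M \<Longrightarrow> norm (u x) \<le> norm (u x\<^sub>0)"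
proof -
  obtain x\<^sub>0 where "x\<^sub>0 \<in> M" and max: "\<And>x. x \<in> M \<Longrightarrow> norm (u x) \<le> norm (u x\<^sub>0)"
    using continuous_attains_sup[OF assms(1,2) continuous_on_norm[OF assms(3)]] by blast
  moreover have "(SUP x\<in>M. norm (u x)) = norm (u x\<^sub>0)"
    using \<open>x\<^sub>0 \<in> M\<close> max by (intro cSup_eq_maximum) auto
  ultimately show thesis using that by blast
qed

lemma integral_norm_power2_ge:
  fixes Vol :: "'a::metric_space measure" and u :: "'a \<Rightarrow> 'b::real_normed_vector"
  assumes "finite_measure Vol" and sets: "sets Vol = sets (restrict_space borel M)"
    and growth: "lower_volume_growth Vol M c m r" and "0 < c" "0 < m"
    and lip: "L-lipschitz_on M u" and "0 < L" and "x\<^sub>0 \<in> M"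
    and max: "\<And>x. x \<in> M \<Longrightarrow> norm (u x) \<le> norm (u x\<^sub>0)" and "norm (u x\<^sub>0) \<le> L * r"
  shows "c / L ^ m * (2 * norm (u x\<^sub>0) ^ (m + 2) / ((real m + 1) * (real m + 2))) \<le> (\<integral>x. (norm (u x))\<^sup>2 \<partial>Vol)"
proof -
  interpret finite_measure Vol by fact
  have space: "space Vol = M"
    using sets_eq_imp_space_eq[OF sets] by (simp add: space_restrict_space)
  have "(\<lambda>x. (norm (u x))\<^sup>2) \<in> borel_measurable Vol"
    using lipschitz_on_continuous_on[OF lip]
    by (intro measurable_continuous_on_restrict_sets[OF sets] continuous_intros)
  then have int: "integrable Vol (\<lambda>x. (norm (u x))\<^sup>2)"
    by (intro integrable_const_bound[where B="(norm (u x\<^sub>0))\<^sup>2"]) (use max space in \<open>auto intro!: power_mono\<close>)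
  have cone_le: "(max 0 (norm (u x\<^sub>0) - L * dist y x\<^sub>0))\<^sup>2 \<le> (norm (u y))\<^sup>2" if "y \<in> M" for y
  proof -
    have "norm (u x\<^sub>0) - norm (u y) \<le> L * dist y x\<^sub>0"
      using lipschitz_onD[OF lip that \<open>x\<^sub>0 \<in> M\<close>] norm_triangle_ineq2[of "u x\<^sub>0" "u y"]
      by (simp add: dist_norm norm_minus_commute)
    then show ?thesis
      by (intro power_mono) auto
  qed
  have "ennreal (c / L ^ m * (2 * norm (u x\<^sub>0) ^ (m + 2) / ((real m + 1) * (real m + 2))))
      \<le> (\<integral>\<^sup>+ y. ennreal ((max 0 (norm (u x\<^sub>0) - L * dist y x\<^sub>0))\<^sup>2) \<partial>Vol)"
    using \<open>norm (u x\<^sub>0) \<le> L * r\<close>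
    by (intro nn_integral_cone_ge[OF sigma_finite_measure_axioms sets growth \<open>0 < c\<close> \<open>0 < m\<close> \<open>x\<^sub>0 \<in> M\<close> \<open>0 < L\<close>]) auto
  also have "\<dots> \<le> (\<integral>\<^sup>+ y. ennreal ((norm (u y))\<^sup>2) \<partial>Vol)"
    using cone_le space by (intro nn_integral_mono ennreal_leI) auto
  also have "\<dots> = ennreal (\<integral>x. (norm (u x))\<^sup>2 \<partial>Vol)"
    by (rule nn_integral_eq_integral[OF int]) auto
  finally show ?thesis
    by (simp add: ennreal_le_iff integral_nonneg_AE)
qed

lemma Sup_norm_power_le_L2_norm:
  fixes Vol :: "'a::metric_space measure" and u :: "'a \<Rightarrow> 'b::real_normed_vector"
  assumes "finite_measure Vol" and "sets Vol = sets (restrict_space borel M)"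
    and "compact M" "M \<noteq> {}" and growth: "lower_volume_growth Vol M c m r" and "0 < c" "0 < m"
    and lip: "L-lipschitz_on M u" and small: "(SUP x\<in>M. norm (u x)) \<le> L * r"
  shows "(SUP x\<in>M. norm (u x)) ^ (m + 2)
           \<le> real ((m + 2) * (m + 1)) / (2 * c) * L ^ m * (\<integral>x. (norm (u x))\<^sup>2 \<partial>Vol)"
proof -
  define S where "S = (SUP x\<in>M. norm (u x))"
  define I where "I = (\<integral>x. (norm (u x))\<^sup>2 \<partial>Vol)"
  have "0 \<le> L"
    using lip by (rule lipschitz_on_nonneg)
  have "0 \<le> I"
    unfolding I_def by (intro integral_nonneg_AE) auto
  obtain x\<^sub>0 where "x\<^sub>0 \<in> M" and S_eq: "S = norm (u x\<^sub>0)" and max: "\<And>x. x \<in> M \<Longrightarrow> norm (u x) \<le> norm (u x\<^sub>0)"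
    using continuous_on_norm_attains_Sup[OF \<open>compact M\<close> \<open>M \<noteq> {}\<close> lipschitz_on_continuous_on[OF lip]]
    unfolding S_def by metis
  show ?thesis
  proof (cases "S = 0")
    case True
    then show ?thesis
      using \<open>0 \<le> I\<close> \<open>0 \<le> L\<close> \<open>0 < c\<close> unfolding S_def[symmetric] I_def[symmetric] by simp
  next
    case False
    then have "0 < L"
      using small \<open>0 \<le> L\<close> S_eq by (cases "L = 0") (auto simp: S_def)
    define P where "P = (real m + 1) * (real m + 2)"
    have "P \<noteq> 0"
      unfolding P_def by (intro mult_pos_pos[THEN less_imp_neq, symmetric]) linarith+
    have P_eq: "real ((m + 2) * (m + 1)) = P"
      unfolding P_def by (simp add: algebra_simps)
    have "S ^ (m + 2) = real ((m + 2) * (m + 1)) / (2 * c) * L ^ m * (c / L ^ m * (2 * S ^ (m + 2) / P))"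
      unfolding P_eq using \<open>P \<noteq> 0\<close> \<open>0 < c\<close> \<open>0 < L\<close> by (simp add: field_simps)
    also have "\<dots> \<le> real ((m + 2) * (m + 1)) / (2 * c) * L ^ m * I"
      using integral_norm_power2_ge[OF assms(1,2) growth \<open>0 < c\<close> \<open>0 < m\<close> lip \<open>0 < L\<close> \<open>x\<^sub>0 \<in> M\<close> max]
        small \<open>0 < c\<close> \<open>0 < L\<close> unfolding S_def[symmetric] I_def[symmetric] S_eq P_def
      by (intro mult_left_mono) auto
    finally show ?thesis
      unfolding S_def I_def .
  qed
qed

lemma Sup_norm_square_le_L2_norm:
  fixes Vol :: "'a::metric_space measure" and u :: "'a \<Rightarrow> 'b::real_normed_vector"
  assumes "finite_measure Vol" and sets: "sets Vol = sets (restrict_space borel M)"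
    and "compact M" "M \<noteq> {}" and growth: "lower_volume_growth Vol M c m r" and "0 < c" "0 < m" "0 < r"
    and lip: "L-lipschitz_on M u" and large: "L * r \<le> (SUP x\<in>M. norm (u x))"
  shows "(SUP x\<in>M. norm (u x))\<^sup>2 \<le> real ((m + 2) * (m + 1)) / (2 * c * r ^ m) * (\<integral>x. (norm (u x))\<^sup>2 \<partial>Vol)"
proof -
  define S where "S = (SUP x\<in>M. norm (u x))"
  define I where "I = (\<integral>x. (norm (u x))\<^sup>2 \<partial>Vol)"
  define K where "K = real ((m + 2) * (m + 1)) / (2 * c)"
  have "0 \<le> I"
    unfolding I_def by (intro integral_nonneg_AE) auto
  have "0 \<le> S"
    using large lipschitz_on_nonneg[OF lip] \<open>0 < r\<close> unfolding S_def by (meson order_trans zero_le_mult_iff less_imp_le)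
  show ?thesis
  proof (cases "S = 0")
    case True
    then show ?thesis
      using \<open>0 \<le> I\<close> \<open>0 < c\<close> \<open>0 < r\<close> unfolding S_def[symmetric] I_def[symmetric] by simp
  next
    case False
    then have "0 < S"
      using \<open>0 \<le> S\<close> by simp
    have "(S / r)-lipschitz_on M u"
      using large \<open>0 < r\<close> unfolding S_def by (intro lipschitz_on_le[OF lip]) (simp add: field_simps)
    then have bound: "S ^ (m + 2) \<le> K * (S / r) ^ m * I"
      unfolding K_def S_def I_def using \<open>0 < r\<close>
      by (intro Sup_norm_power_le_L2_norm[OF assms(1-7)]) (simp_all add: field_simps)
    have "S\<^sup>2 * S ^ m = S ^ (m + 2)"
      by (simp add: power_add power2_eq_square)
    also have "\<dots> \<le> K * (S / r) ^ m * I"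
      by (rule bound)
    also have "\<dots> = (K * I / r ^ m) * S ^ m"
      by (simp add: power_divide mult_ac)
    finally have "S\<^sup>2 \<le> K * I / r ^ m"
      by (rule mult_right_le_imp_le) (use \<open>0 < S\<close> in simp)
    then show ?thesis
      unfolding K_def S_def I_def by simp
  qed
qed

lemma Sup_norm_le_L2_norm_cases:
  fixes Vol :: "'a::metric_space measure" and u :: "'a \<Rightarrow> 'b::real_normed_vector"
  assumes "finite_measure Vol" and "sets Vol = sets (restrict_space borel M)" and "compact M" "M \<noteq> {}"
    and "lower_volume_growth Vol M (\<alpha> / 2) m r" and "0 < \<alpha>" "0 < m" "0 < r" and lip: "L-lipschitz_on M u"
  shows "((SUP x\<in>M. norm (u x)) \<le> L * r \<longrightarrow>
           (SUP x\<in>M. norm (u x)) ^ (m + 2) \<le> real ((m + 2) * (m + 1)) / \<alpha> * L ^ m * (\<integral>x. (norm (u x))\<^sup>2 \<partial>Vol))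
       \<and> (L * r \<le> (SUP x\<in>M. norm (u x)) \<longrightarrow>
           (SUP x\<in>M. norm (u x))\<^sup>2 \<le> 2 ^ (m + 1) * real (m + 1) / (\<alpha> * r ^ m) * (\<integral>x. (norm (u x))\<^sup>2 \<partial>Vol))"
proof (intro conjI impI)
  have "0 < \<alpha> / 2"
    using \<open>0 < \<alpha>\<close> by simp
  note bounds = Sup_norm_power_le_L2_norm[OF assms(1-5) \<open>0 < \<alpha> / 2\<close> \<open>0 < m\<close> lip]
    Sup_norm_square_le_L2_norm[OF assms(1-5) \<open>0 < \<alpha> / 2\<close> \<open>0 < m\<close> \<open>0 < r\<close> lip]
  show "(SUP x\<in>M. norm (u x)) ^ (m + 2) \<le> real ((m + 2) * (m + 1)) / \<alpha> * L ^ m * (\<integral>x. (norm (u x))\<^sup>2 \<partial>Vol)"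
    if "(SUP x\<in>M. norm (u x)) \<le> L * r"
    using bounds(1)[OF that] by simp
  assume "L * r \<le> (SUP x\<in>M. norm (u x))"
  then have "(SUP x\<in>M. norm (u x))\<^sup>2 \<le> real ((m + 2) * (m + 1)) / (\<alpha> * r ^ m) * (\<integral>x. (norm (u x))\<^sup>2 \<partial>Vol)"
    using bounds(2) by simp
  also have "\<dots> \<le> 2 ^ (m + 1) * real (m + 1) / (\<alpha> * r ^ m) * (\<integral>x. (norm (u x))\<^sup>2 \<partial>Vol)"
  proof (intro mult_right_mono divide_right_mono)
    have "m + 2 \<le> 2 ^ (m + 1)"
      using less_exp[of "m + 1"] by simp
    then have "(m + 2) * (m + 1) \<le> 2 ^ (m + 1) * (m + 1)"
      by (rule mult_right_mono) simp
    then show "real ((m + 2) * (m + 1)) \<le> 2 ^ (m + 1) * real (m + 1)"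
      by (metis of_nat_le_iff of_nat_mult of_nat_numeral of_nat_power)
    show "0 \<le> \<alpha> * r ^ m" "0 \<le> (\<integral>x. (norm (u x))\<^sup>2 \<partial>Vol)"
      using \<open>0 < \<alpha>\<close> \<open>0 < r\<close> by auto
  qed
  finally show "(SUP x\<in>M. norm (u x))\<^sup>2 \<le> 2 ^ (m + 1) * real (m + 1) / (\<alpha> * r ^ m) * (\<integral>x. (norm (u x))\<^sup>2 \<partial>Vol)" .
qed

section \<open>Affine reparametrisation of charts\<close>

lemma open_affine_vimage:
  fixes G :: "'a::real_normed_vector \<Rightarrow> 'b::real_normed_vector"
  assumes "bounded_linear G" and "open V"
  shows "open ((\<lambda>z. c + G z) -` V)"
  using assms by (intro continuous_open_vimage continuous_intros linear_continuous_at) auto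

lemma iter_deriv_affine_comp:
  fixes f :: "'b::real_normed_vector \<Rightarrow> 'c::real_normed_vector" and G :: "'a::real_normed_vector \<Rightarrow> 'b"
  assumes G: "bounded_linear G" and f: "smooth_on V f" and "open V" and "c + G z \<in> V"
  shows "iter_deriv (\<lambda>z. f (c + G z)) vs z = iter_deriv f (map G vs) (c + G z)"
  using \<open>c + G z \<in> V\<close>
proof (induction vs arbitrary: z)
  case Nil
  then show ?case by simp
next
  case (Cons v vs)
  define F where "F = iter_deriv f (map G vs)"
  have "F differentiable (at (c + G z))"
    using f Cons.prems unfolding smooth_on_def F_def by blast
  moreover have "((\<lambda>z. c + G z) has_derivative G) (at z)"
    using G by (auto intro!: derivative_eq_intros bounded_linear_imp_has_derivative)
  ultimately have "((F \<circ> (\<lambda>z. c + G z)) has_derivative frechet_derivative F (at (c + G z)) \<circ> G) (at z)"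
    by (intro diff_chain_at) (auto simp: frechet_derivative_works)
  then have "(iter_deriv (\<lambda>z. f (c + G z)) vs has_derivative frechet_derivative F (at (c + G z)) \<circ> G) (at z)"
    by (rule has_derivative_transform_within_open[OF _ open_affine_vimage[OF G \<open>open V\<close>]])
       (use Cons in \<open>auto simp: F_def\<close>)
  then show ?case
    by (simp add: frechet_derivative_at[symmetric] F_def)
qed

lemma frechet_derivative_affine_comp:
  fixes f :: "'b::real_normed_vector \<Rightarrow> 'c::real_normed_vector" and G :: "'a::real_normed_vector \<Rightarrow> 'b"
  assumes "bounded_linear G" and "smooth_on V f" and "open V" and "c + G z \<in> V"
  shows "frechet_derivative (\<lambda>z. f (c + G z)) (at z) = frechet_derivative f (at (c + G z)) \<circ> G"
proof
  fix h
  show "frechet_derivative (\<lambda>z. f (c + G z)) (at z) h = (frechet_derivative f (at (c + G z)) \<circ> G) h"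
    using iter_deriv_affine_comp[OF assms, of "[h]"] by simp
qed

lemma smooth_on_affine_comp:
  fixes f :: "'b::real_normed_vector \<Rightarrow> 'c::real_normed_vector" and G :: "'a::real_normed_vector \<Rightarrow> 'b"
  assumes G: "bounded_linear G" and f: "smooth_on V f" and "open V"
  shows "smooth_on ((\<lambda>z. c + G z) -` V) (\<lambda>z. f (c + G z))"
  unfolding smooth_on_def
proof (intro allI ballI)
  fix vs z
  assume z: "z \<in> (\<lambda>z. c + G z) -` V"
  have "(\<lambda>z. c + G z) differentiable (at z)"
    using G by (intro differentiable_add differentiable_const bounded_linear_imp_differentiable)
  moreover have "iter_deriv f (map G vs) differentiable (at (c + G z))"
    using f z unfolding smooth_on_def by auto
  ultimately have "(iter_deriv f (map G vs) \<circ> (\<lambda>z. c + G z)) differentiable (at z)"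
    by (rule differentiable_chain_at)
  then obtain D where "((iter_deriv f (map G vs) \<circ> (\<lambda>z. c + G z)) has_derivative D) (at z)"
    unfolding differentiable_def by blast
  then have "(iter_deriv (\<lambda>z. f (c + G z)) vs has_derivative D) (at z)"
    by (rule has_derivative_transform_within_open[OF _ open_affine_vimage[OF G \<open>open V\<close>] z])
       (simp add: iter_deriv_affine_comp[OF G f \<open>open V\<close>])
  then show "iter_deriv (\<lambda>z. f (c + G z)) vs differentiable (at z)"
    unfolding differentiable_def by blast
qed

lemma local_param_affine_comp:
  fixes \<phi> :: "real^'m \<Rightarrow> real^'n" and G :: "real^'m \<Rightarrow> real^'m"
  assumes lp: "local_param M V \<phi>" and G: "linear G" "inj G"
  shows "local_param M ((\<lambda>z. c + G z) -` V) (\<lambda>z. \<phi> (c + G z))"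
proof -
  obtain U \<phi>' where "open U" and hom: "homeomorphism V (M \<inter> U) \<phi> \<phi>'" and "open V"
    and smooth: "smooth_on V \<phi>" and inj_deriv: "\<forall>x\<in>V. inj (frechet_derivative \<phi> (at x))"
    using lp unfolding local_param_def by blast
  have bl: "bounded_linear G"
    using G(1) by (simp add: linear_conv_bounded_linear)
  obtain H where "linear H" and HG: "\<And>x. H (G x) = x" and GH: "\<And>y. G (H y) = y"
    using linear_injective_isomorphism[OF G] by auto
  have "bounded_linear H"
    using \<open>linear H\<close> by (simp add: linear_conv_bounded_linear)
  have "homeomorphism ((\<lambda>z. c + G z) -` V) V (\<lambda>z. c + G z) (\<lambda>v. H (v - c))"
    unfolding homeomorphism_def
  proof (intro conjI ballI)
    have "surj (\<lambda>z. c + G z)"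
      by (rule surjI[of _ "\<lambda>v. H (v - c)"]) (simp add: GH)
    then show "(\<lambda>z. c + G z) ` ((\<lambda>z. c + G z) -` V) = V"
      by (rule surj_image_vimage_eq)
    show "(\<lambda>v. H (v - c)) ` V = (\<lambda>z. c + G z) -` V"
      using GH HG by (auto simp: image_iff) (metis add_diff_cancel_left')
    show "continuous_on ((\<lambda>z. c + G z) -` V) (\<lambda>z. c + G z)"
      using bl by (intro continuous_intros linear_continuous_on)
    show "continuous_on V (\<lambda>v. H (v - c))"
      using \<open>bounded_linear H\<close> by (intro continuous_on_compose2[OF linear_continuous_on[of H UNIV]] continuous_intros) auto
  qed (auto simp: HG GH)
  then have "homeomorphism ((\<lambda>z. c + G z) -` V) (M \<inter> U) (\<lambda>z. \<phi> (c + G z)) ((\<lambda>v. H (v - c)) \<circ> \<phi>')"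
    using homeomorphism_compose[OF _ hom] by (simp add: o_def)
  then have "\<exists>U \<phi>'. open U \<and> homeomorphism ((\<lambda>z. c + G z) -` V) (M \<inter> U) (\<lambda>z. \<phi> (c + G z)) \<phi>'"
    using \<open>open U\<close> by blast
  moreover have "\<forall>z\<in>(\<lambda>z. c + G z) -` V. inj (frechet_derivative (\<lambda>z. \<phi> (c + G z)) (at z))"
    using inj_deriv G(2) frechet_derivative_affine_comp[OF bl smooth \<open>open V\<close>, of c]
    by (simp add: inj_compose)
  ultimately show ?thesis
    unfolding local_param_def
    using open_affine_vimage[OF bl \<open>open V\<close>] smooth_on_affine_comp[OF bl smooth \<open>open V\<close>] by simp
qed

lemma linear_inj_isometric_reparam:
  fixes A :: "'a::euclidean_space \<Rightarrow> 'b::euclidean_space"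
  assumes "linear A" and "inj A"
  obtains G :: "'a \<Rightarrow> 'a" where "linear G" "inj G" "\<And>z. norm (A (G z)) = norm z"
proof -
  have "subspace (range A)"
    using linear_subspace_image[OF \<open>linear A\<close> subspace_UNIV] .
  moreover have "dim (UNIV :: 'a set) = dim (range A)"
    using dim_image_eq[OF \<open>linear A\<close>, of UNIV] \<open>inj A\<close> by simp
  ultimately obtain f :: "'a \<Rightarrow> 'b" and g :: "'b \<Rightarrow> 'a" where "linear g"
    and g_iso: "\<And>y. y \<in> range A \<Longrightarrow> norm (g y) = norm y" and fg: "\<And>y. y \<in> range A \<Longrightarrow> f (g y) = y"
    by (rule isometries_subspaces[OF subspace_UNIV]) (rule that)
  have "linear (g \<circ> A)"
    using \<open>linear A\<close> \<open>linear g\<close> by (rule linear_compose)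
  moreover have "inj (g \<circ> A)"
  proof (rule injI)
    fix x y
    assume "(g \<circ> A) x = (g \<circ> A) y"
    have "A x = f (g (A x))"
      using fg by simp
    also have "\<dots> = f (g (A y))"
      using \<open>(g \<circ> A) x = (g \<circ> A) y\<close> by simp
    also have "\<dots> = A y"
      using fg by simp
    finally show "x = y"
      using \<open>inj A\<close> by (simp add: inj_eq)
  qed
  ultimately obtain G :: "'a \<Rightarrow> 'a" where "linear G" and GA: "\<And>z. (g \<circ> A) (G z) = z"
    by (metis linear_injective_isomorphism)
  moreover have "inj G"
  proof (rule injI)
    fix x y
    assume "G x = G y"
    then show "x = y"
      using GA[of x] GA[of y] by simp
  qed
  moreover have "norm (A (G z)) = norm z" for z
    using g_iso[of "A (G z)"] GA[of z] by simp
  ultimately show thesis using that by blast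
qed

lemma local_param_isometric_at:
  fixes \<phi> :: "real^'m \<Rightarrow> real^'n"
  assumes lp: "local_param M V \<phi>" and "v \<in> V"
  obtains V' :: "(real^'m) set" and \<psi> where "local_param M V' \<psi>" "0 \<in> V'" "\<psi> 0 = \<phi> v"
    "\<And>h. norm (frechet_derivative \<psi> (at 0) h) = norm h"
proof -
  have "open V" and smooth: "smooth_on V \<phi>" and "inj (frechet_derivative \<phi> (at v))"
    using lp \<open>v \<in> V\<close> unfolding local_param_def by auto
  have "\<phi> differentiable (at v)"
    using smooth \<open>v \<in> V\<close> unfolding smooth_on_def by (metis iter_deriv.simps(1))
  then have "linear (frechet_derivative \<phi> (at v))"
    by (meson frechet_derivative_works has_derivative_linear)
  then obtain G :: "real^'m \<Rightarrow> real^'m" where G: "linear G" "inj G" and iso: "\<And>z. norm (frechet_derivative \<phi> (at v) (G z)) = norm z"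
    using linear_inj_isometric_reparam \<open>inj (frechet_derivative \<phi> (at v))\<close> by blast
  have bl: "bounded_linear G"
    using G(1) by (simp add: linear_conv_bounded_linear)
  show thesis
  proof (rule that[OF local_param_affine_comp[OF lp G, of v]])
    show "0 \<in> (\<lambda>z. v + G z) -` V" and "\<phi> (v + G 0) = \<phi> v"
      using \<open>v \<in> V\<close> linear_0[OF G(1)] by simp_all
    show "norm (frechet_derivative (\<lambda>z. \<phi> (v + G z)) (at 0) h) = norm h" for h
      using frechet_derivative_affine_comp[OF bl smooth \<open>open V\<close>, of v 0] \<open>v \<in> V\<close> iso linear_0[OF G(1)] by simp
  qed
qed

section \<open>Volume of chart images\<close>

lemma local_param_image_open:
  assumes lp: "local_param M V \<psi>" and "open B" and "B \<subseteq> V"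
  obtains W where "open W" "\<psi> ` B = M \<inter> W"
proof -
  obtain U \<psi>' where "open U" and hom: "homeomorphism V (M \<inter> U) \<psi> \<psi>'"
    using lp unfolding local_param_def by blast
  have "openin (top_of_set V) B"
    using \<open>open B\<close> \<open>B \<subseteq> V\<close> unfolding openin_open by blast
  then have "openin (top_of_set (M \<inter> U)) (\<psi> ` B)"
    by (rule homeomorphism_imp_open_map[OF hom])
  then obtain T where "open T" "\<psi> ` B = M \<inter> U \<inter> T"
    unfolding openin_open by blast
  then show thesis
    using that[of "U \<inter> T"] \<open>open U\<close> by (simp add: Int_assoc open_Int)
qed

lemma sets_volume_measure:
  assumes "is_volume_measure M TYPE('m::finite) Vol" and "W \<in> sets borel"
  shows "M \<inter> W \<in> sets Vol"
  using assms by (auto simp: is_volume_measure_def sets_restrict_space)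

lemma space_volume_measure:
  assumes "is_volume_measure M TYPE('m::finite) Vol"
  shows "space Vol = M"
  using assms by (simp add: is_volume_measure_def)

lemma is_volume_measureD:
  fixes \<phi> :: "real^'m \<Rightarrow> real^'n"
  assumes "is_volume_measure M TYPE('m) Vol" and "local_param M V \<phi>" and "A \<in> sets Vol" "A \<subseteq> \<phi> ` V"
  shows "emeasure Vol A = (\<integral>\<^sup>+ x. indicator (V \<inter> \<phi> -` A) x * ennreal (param_jacobian \<phi> x) \<partial>lborel)"
  using assms unfolding is_volume_measure_def by blast

lemma emeasure_local_param_image:
  fixes \<psi> :: "real^'m \<Rightarrow> real^'n"
  assumes Vol: "is_volume_measure M TYPE('m) Vol" and lp: "local_param M V \<psi>" and "open B" "B \<subseteq> V"
  shows "emeasure Vol (\<psi> ` B) = (\<integral>\<^sup>+ x. indicator B x * ennreal (param_jacobian \<psi> x) \<partial>lborel)"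
proof -
  obtain U \<psi>' where hom: "homeomorphism V (M \<inter> U) \<psi> \<psi>'"
    using lp unfolding local_param_def by blast
  obtain W where "open W" and W: "\<psi> ` B = M \<inter> W"
    using local_param_image_open[OF lp \<open>open B\<close> \<open>B \<subseteq> V\<close>] by blast
  have "V \<inter> \<psi> -` (\<psi> ` B) \<subseteq> B"
  proof
    fix x
    assume "x \<in> V \<inter> \<psi> -` (\<psi> ` B)"
    then obtain b where "x \<in> V" "b \<in> B" "\<psi> x = \<psi> b"
      by auto
    then have "x = b"
      using homeomorphism_apply1[OF hom, of x] homeomorphism_apply1[OF hom, of b] \<open>B \<subseteq> V\<close> by auto
    then show "x \<in> B"
      using \<open>b \<in> B\<close> by simp
  qed
  then have preimage: "V \<inter> \<psi> -` (\<psi> ` B) = B"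
    using \<open>B \<subseteq> V\<close> by blast
  have "\<psi> ` B \<in> sets Vol"
    unfolding W using sets_volume_measure[OF Vol borel_open[OF \<open>open W\<close>]] .
  from is_volume_measureD[OF Vol lp this image_mono[OF \<open>B \<subseteq> V\<close>]] show ?thesis
    unfolding preimage .
qed

lemma emeasure_local_param_image_ge:
  fixes \<psi> :: "real^'m \<Rightarrow> real^'n"
  assumes "is_volume_measure M TYPE('m) Vol" and "local_param M V \<psi>" and "open B" "B \<subseteq> V"
    and "\<And>z. z \<in> B \<Longrightarrow> c \<le> param_jacobian \<psi> z"
  shows "ennreal c * emeasure lborel B \<le> emeasure Vol (\<psi> ` B)"
proof -
  have "ennreal c * emeasure lborel B = (\<integral>\<^sup>+ x. ennreal c * indicator B x \<partial>lborel)"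
    using \<open>open B\<close> by (intro nn_integral_cmult_indicator[symmetric]) auto
  also have "\<dots> \<le> (\<integral>\<^sup>+ x. indicator B x * ennreal (param_jacobian \<psi> x) \<partial>lborel)"
    using assms(5) by (intro nn_integral_mono) (auto simp: indicator_def ennreal_leI)
  also have "\<dots> = emeasure Vol (\<psi> ` B)"
    by (rule emeasure_local_param_image[OF assms(1-4), symmetric])
  finally show ?thesis .
qed

lemma emeasure_local_param_image_le:
  fixes \<psi> :: "real^'m \<Rightarrow> real^'n"
  assumes "is_volume_measure M TYPE('m) Vol" and "local_param M V \<psi>" and "open B" "B \<subseteq> V"
    and "\<And>z. z \<in> B \<Longrightarrow> param_jacobian \<psi> z \<le> C"
  shows "emeasure Vol (\<psi> ` B) \<le> ennreal C * emeasure lborel B"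
proof -
  have "emeasure Vol (\<psi> ` B) = (\<integral>\<^sup>+ x. indicator B x * ennreal (param_jacobian \<psi> x) \<partial>lborel)"
    by (rule emeasure_local_param_image[OF assms(1-4)])
  also have "\<dots> \<le> (\<integral>\<^sup>+ x. ennreal C * indicator B x \<partial>lborel)"
    using assms(5) by (intro nn_integral_mono) (auto simp: indicator_def ennreal_leI)
  also have "\<dots> = ennreal C * emeasure lborel B"
    using \<open>open B\<close> by (intro nn_integral_cmult_indicator) auto
  finally show ?thesis .
qed

lemma det_gram_isometry:
  fixes T :: "real^'m \<Rightarrow> real^'n"
  assumes "linear T" and iso: "\<And>h. norm (T h) = norm h"
  shows "det (transpose (matrix T) ** matrix T) = 1"
proof -
  have inner_T: "T x \<bullet> T y = x \<bullet> y" for x y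
    using dot_norm[of "T x" "T y"] dot_norm[of x y] linear_add[OF \<open>linear T\<close>, of x y, symmetric] iso by simp
  have "transpose (matrix T) ** matrix T = mat 1"
  proof (simp add: vec_eq_iff, intro allI)
    fix i j
    have "(transpose (matrix T) ** matrix T) $ i $ j = T (axis i 1) \<bullet> T (axis j 1)"
      by (simp add: matrix_matrix_mult_def transpose_def matrix_def inner_vec_def)
    also have "\<dots> = mat 1 $ i $ j"
      by (simp add: inner_T inner_axis_axis mat_def)
    finally show "(transpose (matrix T) ** matrix T) $ i $ j = mat 1 $ i $ j" .
  qed
  then show ?thesis by simp
qed

lemma isCont_frechet_derivative_smooth_on:
  assumes "smooth_on V f" and "z \<in> V"
  shows "isCont (\<lambda>z. frechet_derivative f (at z) h) z"
proof -
  have "iter_deriv f [h] differentiable (at z)"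
    using assms unfolding smooth_on_def by blast
  then show ?thesis
    using differentiable_imp_continuous_within by fastforce
qed

lemma isCont_param_jacobian:
  fixes \<psi> :: "real^'m \<Rightarrow> real^'n"
  assumes "smooth_on V \<psi>" and "z \<in> V"
  shows "isCont (param_jacobian \<psi>) z"
proof -
  have entry: "(transpose (matrix (frechet_derivative \<psi> (at y))) ** matrix (frechet_derivative \<psi> (at y))) $ i $ j
     = (\<Sum>k\<in>UNIV. frechet_derivative \<psi> (at y) (axis i 1) $ k * frechet_derivative \<psi> (at y) (axis j 1) $ k)" for y i j
    by (simp add: matrix_matrix_mult_def transpose_def matrix_def)
  show ?thesis
    unfolding param_jacobian_def[abs_def] det_def entry
    by (intro continuous_intros isCont_frechet_derivative_smooth_on[OF assms])
qed

lemma onorm_less_near: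
  fixes D :: "'a::euclidean_space \<Rightarrow> 'a \<Rightarrow> 'b::real_normed_vector"
  assumes linear: "\<And>z. z \<in> V \<Longrightarrow> bounded_linear (D z)" and "z\<^sub>0 \<in> V"
    and cont: "\<And>i. i \<in> Basis \<Longrightarrow> isCont (\<lambda>z. D z i) z\<^sub>0" and "onorm (D z\<^sub>0) < B"
  obtains d where "0 < d" "\<And>z. z \<in> V \<Longrightarrow> dist z z\<^sub>0 < d \<Longrightarrow> onorm (D z) < B"
proof -
  define \<eta> where "\<eta> = B - onorm (D z\<^sub>0)"
  have "0 < \<eta>"
    using \<open>onorm (D z\<^sub>0) < B\<close> unfolding \<eta>_def by simp
  have "isCont (\<lambda>z. \<Sum>i\<in>Basis. norm (D z i - D z\<^sub>0 i)) z\<^sub>0"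
    using cont by (intro continuous_intros) auto
  then obtain d where "0 < d" and d: "\<And>z. dist z z\<^sub>0 < d \<Longrightarrow>
      dist (\<Sum>i\<in>Basis. norm (D z i - D z\<^sub>0 i)) (\<Sum>i\<in>Basis. norm (D z\<^sub>0 i - D z\<^sub>0 i)) < \<eta>"
    using \<open>0 < \<eta>\<close> unfolding continuous_at_eps_delta by blast
  have less: "onorm (D z) < B" if "z \<in> V" "dist z z\<^sub>0 < d" for z
  proof -
    have "onorm (\<lambda>h. D z h - D z\<^sub>0 h) \<le> (\<Sum>i\<in>Basis. norm (D z i - D z\<^sub>0 i))"
      using \<open>z \<in> V\<close> \<open>z\<^sub>0 \<in> V\<close> by (intro onorm_componentwise bounded_linear_sub linear)
    also have "\<dots> < \<eta>"
      using d[of z] that by (simp add: dist_real_def)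
    finally have "onorm (\<lambda>h. D z h - D z\<^sub>0 h) < \<eta>" .
    moreover have "onorm (D z) \<le> onorm (D z\<^sub>0) + onorm (\<lambda>h. D z h - D z\<^sub>0 h)"
      using onorm_triangle[OF linear[OF \<open>z\<^sub>0 \<in> V\<close>]
          bounded_linear_sub[OF linear[OF \<open>z \<in> V\<close>] linear[OF \<open>z\<^sub>0 \<in> V\<close>]]]
      by simp
    ultimately show ?thesis
      unfolding \<eta>_def by linarith
  qed
  show thesis
    by (rule that[OF \<open>0 < d\<close> less])
qed

lemma lipschitz_on_ball_of_onorm_less:
  fixes f :: "'a::euclidean_space \<Rightarrow> 'b::real_normed_vector"
  assumes "open V" and "z\<^sub>0 \<in> V" and deriv: "\<And>z. z \<in> V \<Longrightarrow> (f has_derivative D z) (at z)"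
    and cont: "\<And>i. i \<in> Basis \<Longrightarrow> isCont (\<lambda>z. D z i) z\<^sub>0" and "onorm (D z\<^sub>0) < B"
  obtains \<epsilon> where "0 < \<epsilon>" "ball z\<^sub>0 \<epsilon> \<subseteq> V" "B-lipschitz_on (ball z\<^sub>0 \<epsilon>) f"
proof -
  have linear: "bounded_linear (D z)" if "z \<in> V" for z
    using deriv[OF that] by (rule has_derivative_bounded_linear)
  obtain d where "0 < d" and d: "\<And>z. z \<in> V \<Longrightarrow> dist z z\<^sub>0 < d \<Longrightarrow> onorm (D z) < B"
    using onorm_less_near[OF linear \<open>z\<^sub>0 \<in> V\<close> cont \<open>onorm (D z\<^sub>0) < B\<close>] by blast
  obtain e where "0 < e" "ball z\<^sub>0 e \<subseteq> V"
    using openE[OF \<open>open V\<close> \<open>z\<^sub>0 \<in> V\<close>] by blast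
  define \<epsilon> where "\<epsilon> = min d e"
  have "ball z\<^sub>0 \<epsilon> \<subseteq> V"
    using \<open>ball z\<^sub>0 e \<subseteq> V\<close> unfolding \<epsilon>_def by auto
  have "B-lipschitz_on (ball z\<^sub>0 \<epsilon>) f"
  proof (rule lipschitz_onI)
    have deriv_ball: "(f has_derivative D z) (at z within ball z\<^sub>0 \<epsilon>)" if "z \<in> ball z\<^sub>0 \<epsilon>" for z
      using that \<open>ball z\<^sub>0 \<epsilon> \<subseteq> V\<close> by (intro has_derivative_at_withinI[OF deriv]) blast
    have onorm_le: "onorm (D z) \<le> B" if "z \<in> ball z\<^sub>0 \<epsilon>" for z
    proof -
      have "z \<in> V" "dist z z\<^sub>0 < d"
        using that \<open>ball z\<^sub>0 \<epsilon> \<subseteq> V\<close> unfolding \<epsilon>_def by (auto simp: dist_commute)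
      then show ?thesis
        using d by (simp add: less_imp_le)
    qed
    show "dist (f x) (f y) \<le> B * dist x y" if "x \<in> ball z\<^sub>0 \<epsilon>" "y \<in> ball z\<^sub>0 \<epsilon>" for x y
      using differentiable_bound[OF convex_ball deriv_ball onorm_le that] by (simp add: dist_norm)
    show "0 \<le> B"
      using onorm_pos_le[OF linear[OF \<open>z\<^sub>0 \<in> V\<close>]] \<open>onorm (D z\<^sub>0) < B\<close> by simp
  qed
  moreover have "0 < \<epsilon>"
    using \<open>0 < d\<close> \<open>0 < e\<close> unfolding \<epsilon>_def by simp
  ultimately show thesis
    using that \<open>ball z\<^sub>0 \<epsilon> \<subseteq> V\<close> by blast
qed

section \<open>Lower volume bound on compact submanifolds\<close>

lemma emeasure_lborel_ball_unit_ball_volume: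
  fixes c :: "real^'m"
  assumes "0 \<le> t"
  shows "emeasure lborel (ball c t) = ennreal (unit_ball_volume TYPE('m) * t ^ CARD('m))"
  using content_ball_conv_unit_ball[OF assms, of c] emeasure_lborel_ball_finite[of c t]
  by (simp add: emeasure_eq_ennreal_measure unit_ball_volume_def mult.commute)

lemma local_param_near_isometry:
  fixes \<psi> :: "real^'m \<Rightarrow> real^'n"
  assumes lp: "local_param M V \<psi>" and "z\<^sub>0 \<in> V" and "0 < \<kappa>"
    and iso: "\<And>h. norm (frechet_derivative \<psi> (at z\<^sub>0) h) = norm h"
  obtains \<epsilon> where "0 < \<epsilon>" "ball z\<^sub>0 \<epsilon> \<subseteq> V" "(1 + \<kappa>)-lipschitz_on (ball z\<^sub>0 \<epsilon>) \<psi>"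
    "\<And>z. z \<in> ball z\<^sub>0 \<epsilon> \<Longrightarrow> 3/4 \<le> param_jacobian \<psi> z \<and> param_jacobian \<psi> z \<le> 5/4"
proof -
  have "open V" and smooth: "smooth_on V \<psi>"
    using lp unfolding local_param_def by auto
  have deriv: "(\<psi> has_derivative frechet_derivative \<psi> (at z)) (at z)" if "z \<in> V" for z
    using smooth that unfolding smooth_on_def by (metis iter_deriv.simps(1) frechet_derivative_works)
  have "linear (frechet_derivative \<psi> (at z\<^sub>0))"
    using deriv[OF \<open>z\<^sub>0 \<in> V\<close>] by (rule has_derivative_linear)
  have "onorm (frechet_derivative \<psi> (at z\<^sub>0)) < 1 + \<kappa>"
    using onorm_le[of "frechet_derivative \<psi> (at z\<^sub>0)" 1] iso \<open>0 < \<kappa>\<close> by simp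
  then obtain \<epsilon>\<^sub>1 where "0 < \<epsilon>\<^sub>1" "ball z\<^sub>0 \<epsilon>\<^sub>1 \<subseteq> V" and lip: "(1 + \<kappa>)-lipschitz_on (ball z\<^sub>0 \<epsilon>\<^sub>1) \<psi>"
    using lipschitz_on_ball_of_onorm_less[OF \<open>open V\<close> \<open>z\<^sub>0 \<in> V\<close> deriv
        isCont_frechet_derivative_smooth_on[OF smooth \<open>z\<^sub>0 \<in> V\<close>]]
    by blast
  have "param_jacobian \<psi> z\<^sub>0 = 1"
    unfolding param_jacobian_def using det_gram_isometry[OF \<open>linear _\<close> iso] by simp
  moreover have "isCont (param_jacobian \<psi>) z\<^sub>0"
    using smooth \<open>z\<^sub>0 \<in> V\<close> by (rule isCont_param_jacobian)
  ultimately obtain \<epsilon>\<^sub>2 where "0 < \<epsilon>\<^sub>2" and J: "\<And>z. dist z z\<^sub>0 < \<epsilon>\<^sub>2 \<Longrightarrow> \<bar>param_jacobian \<psi> z - 1\<bar> < 1/4"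
    unfolding continuous_at_eps_delta by (metis dist_real_def zero_less_divide_1_iff zero_less_numeral)
  show thesis
  proof (rule that[of "min \<epsilon>\<^sub>1 \<epsilon>\<^sub>2"])
    show "0 < min \<epsilon>\<^sub>1 \<epsilon>\<^sub>2" and "ball z\<^sub>0 (min \<epsilon>\<^sub>1 \<epsilon>\<^sub>2) \<subseteq> V"
      using \<open>0 < \<epsilon>\<^sub>1\<close> \<open>0 < \<epsilon>\<^sub>2\<close> \<open>ball z\<^sub>0 \<epsilon>\<^sub>1 \<subseteq> V\<close> by auto
    show "(1 + \<kappa>)-lipschitz_on (ball z\<^sub>0 (min \<epsilon>\<^sub>1 \<epsilon>\<^sub>2)) \<psi>"
      by (rule lipschitz_on_subset[OF lip]) auto
    show "3/4 \<le> param_jacobian \<psi> z \<and> param_jacobian \<psi> z \<le> 5/4" if "z \<in> ball z\<^sub>0 (min \<epsilon>\<^sub>1 \<epsilon>\<^sub>2)" for z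
    proof -
      have "\<bar>param_jacobian \<psi> z - 1\<bar> < 1/4"
        using J[of z] that by (simp add: dist_commute)
      then show ?thesis
        by arith
    qed
  qed
qed

lemma emeasure_cball_local_param_ge:
  fixes \<psi> :: "real^'m \<Rightarrow> real^'n"
  assumes Vol: "is_volume_measure M TYPE('m) Vol" and lp: "local_param M V \<psi>"
    and "ball w t \<subseteq> V" "0 < t" and lip: "L-lipschitz_on (ball w t) \<psi>" and "L * t \<le> \<rho>"
    and "0 \<le> c" and J: "\<And>z. z \<in> ball w t \<Longrightarrow> c \<le> param_jacobian \<psi> z"
  shows "ennreal (c * unit_ball_volume TYPE('m) * t ^ CARD('m)) \<le> emeasure Vol (M \<inter> cball (\<psi> w) \<rho>)"
proof -
  have image: "\<psi> ` ball w t \<subseteq> M \<inter> cball (\<psi> w) \<rho>"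
  proof
    fix y
    assume "y \<in> \<psi> ` ball w t"
    then obtain v where v: "v \<in> ball w t" and "y = \<psi> v"
      by blast
    have "\<psi> ` V \<subseteq> M"
      using lp unfolding local_param_def homeomorphism_def by auto
    then have "y \<in> M"
      using v \<open>y = \<psi> v\<close> \<open>ball w t \<subseteq> V\<close> by blast
    have "dist (\<psi> w) y \<le> L * dist w v"
      using lipschitz_onD[OF lip _ v] \<open>y = \<psi> v\<close> \<open>0 < t\<close> by simp
    also have "\<dots> \<le> L * t"
      using v lipschitz_on_nonneg[OF lip] by (intro mult_left_mono) auto
    finally show "y \<in> M \<inter> cball (\<psi> w) \<rho>"
      using \<open>y \<in> M\<close> \<open>L * t \<le> \<rho>\<close> by simp
  qed
  have "0 \<le> unit_ball_volume TYPE('m) * t ^ CARD('m)"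
    using \<open>0 < t\<close> by (simp add: unit_ball_volume_def)
  then have "ennreal (c * unit_ball_volume TYPE('m) * t ^ CARD('m)) = ennreal c * emeasure lborel (ball w t)"
    using \<open>0 < t\<close> \<open>0 \<le> c\<close> by (simp add: emeasure_lborel_ball_unit_ball_volume ennreal_mult mult.assoc)
  also have "\<dots> \<le> emeasure Vol (\<psi> ` ball w t)"
    using J by (rule emeasure_local_param_image_ge[OF Vol lp open_ball \<open>ball w t \<subseteq> V\<close>])
  also have "\<dots> \<le> emeasure Vol (M \<inter> cball (\<psi> w) \<rho>)"
    by (intro emeasure_mono[OF image] sets_volume_measure[OF Vol borel_closed]) simp
  finally show ?thesis .
qed

text \<open>With \<open>\<kappa> = 1 / (4 m)\<close>, Bernoulli's inequality gives \<open>(1 - \<kappa>)\<^sup>m \<ge> 3/4\<close>, and \<open>(3/4)\<^sup>2 \<ge> 1/2\<close>.\<close>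

lemma local_param_cball_volume_ge:
  fixes \<psi> :: "real^'m \<Rightarrow> real^'n"
  assumes Vol: "is_volume_measure M TYPE('m) Vol" and lp: "local_param M V \<psi>"
    and "ball z\<^sub>0 \<epsilon> \<subseteq> V" and lip: "(1 + \<kappa>)-lipschitz_on (ball z\<^sub>0 \<epsilon>) \<psi>"
    and J: "\<And>z. z \<in> ball z\<^sub>0 \<epsilon> \<Longrightarrow> 3/4 \<le> param_jacobian \<psi> z" and \<kappa>: "\<kappa> = 1 / (4 * real CARD('m))"
    and "w \<in> ball z\<^sub>0 (\<epsilon> / 2)" and "0 < \<rho>" "\<rho> \<le> \<epsilon> / 2"
  shows "ennreal (unit_ball_volume TYPE('m) / 2 * \<rho> ^ CARD('m)) \<le> emeasure Vol (M \<inter> cball (\<psi> w) \<rho>)"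
proof -
  define m where "m = CARD('m)"
  define \<alpha> where "\<alpha> = unit_ball_volume TYPE('m)"
  have "0 < m"
    unfolding m_def by simp
  then have "0 < \<kappa>" "\<kappa> < 1"
    unfolding \<kappa> m_def[symmetric] by (simp_all add: field_simps)
  have "1 + real m * (- \<kappa>) \<le> (1 + - \<kappa>) ^ m"
    using \<open>\<kappa> < 1\<close> by (intro Bernoulli_inequality) simp
  then have Bernoulli: "3/4 \<le> (1 - \<kappa>) ^ m"
    using \<open>0 < m\<close> unfolding \<kappa> m_def[symmetric] by simp
  define t where "t = (1 - \<kappa>) * \<rho>"
  have "0 < t" "t \<le> \<rho>"
    unfolding t_def using \<open>0 < \<rho>\<close> \<open>0 < \<kappa>\<close> \<open>\<kappa> < 1\<close> by (simp_all add: mult_le_cancel_right1)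
  have "ball w t \<subseteq> ball z\<^sub>0 \<epsilon>"
    using \<open>w \<in> ball z\<^sub>0 (\<epsilon> / 2)\<close> \<open>t \<le> \<rho>\<close> \<open>\<rho> \<le> \<epsilon> / 2\<close> unfolding ball_subset_ball_iff by (simp add: dist_commute)
  have "(1 + \<kappa>) * t \<le> \<rho>"
    unfolding t_def using \<open>0 < \<rho>\<close> \<open>0 < \<kappa>\<close> by (simp add: algebra_simps)
  have "0 \<le> \<alpha>"
    unfolding \<alpha>_def unit_ball_volume_def by simp
  have "\<alpha> * \<rho> ^ m * (1/2) \<le> \<alpha> * \<rho> ^ m * (3/4 * (1 - \<kappa>) ^ m)"
    using Bernoulli \<open>0 \<le> \<alpha>\<close> \<open>0 < \<rho>\<close> by (intro mult_left_mono) auto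
  then have "ennreal (\<alpha> / 2 * \<rho> ^ m) \<le> ennreal (3/4 * \<alpha> * t ^ m)"
    unfolding t_def power_mult_distrib by (intro ennreal_leI) (simp add: mult_ac)
  also have "\<dots> \<le> emeasure Vol (M \<inter> cball (\<psi> w) \<rho>)"
    unfolding \<alpha>_def m_def using \<open>ball w t \<subseteq> ball z\<^sub>0 \<epsilon>\<close> \<open>ball z\<^sub>0 \<epsilon> \<subseteq> V\<close> J
    by (intro emeasure_cball_local_param_ge[OF Vol lp _ \<open>0 < t\<close> lipschitz_on_subset[OF lip] \<open>(1 + \<kappa>) * t \<le> \<rho>\<close>]) auto
  finally show ?thesis
    unfolding \<alpha>_def m_def .
qed

lemma local_param_volume_growth:
  fixes \<psi> :: "real^'m \<Rightarrow> real^'n"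
  assumes Vol: "is_volume_measure M TYPE('m) Vol" and lp: "local_param M V \<psi>" and "z\<^sub>0 \<in> V"
    and iso: "\<And>h. norm (frechet_derivative \<psi> (at z\<^sub>0) h) = norm h"
  obtains \<delta> W where "0 < \<delta>" "open W" "\<psi> z\<^sub>0 \<in> W" "emeasure Vol (M \<inter> W) < \<infinity>"
    "lower_volume_growth Vol (M \<inter> W) (unit_ball_volume TYPE('m) / 2) CARD('m) \<delta>"
proof -
  define \<kappa> where "\<kappa> = 1 / (4 * real CARD('m))"
  have "0 < \<kappa>"
    unfolding \<kappa>_def by simp
  obtain \<epsilon> where "0 < \<epsilon>" "ball z\<^sub>0 \<epsilon> \<subseteq> V" and lip: "(1 + \<kappa>)-lipschitz_on (ball z\<^sub>0 \<epsilon>) \<psi>"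
    and J: "\<And>z. z \<in> ball z\<^sub>0 \<epsilon> \<Longrightarrow> 3/4 \<le> param_jacobian \<psi> z \<and> param_jacobian \<psi> z \<le> 5/4"
    using local_param_near_isometry[OF lp \<open>z\<^sub>0 \<in> V\<close> \<open>0 < \<kappa>\<close> iso] by blast
  have J_ge: "3/4 \<le> param_jacobian \<psi> z" if "z \<in> ball z\<^sub>0 \<epsilon>" for z
    using J[OF that] by blast
  define \<delta> where "\<delta> = \<epsilon> / 2"
  have "0 < \<delta>" and "ball z\<^sub>0 \<delta> \<subseteq> ball z\<^sub>0 \<epsilon>"
    unfolding \<delta>_def using \<open>0 < \<epsilon>\<close> by auto
  then have "ball z\<^sub>0 \<delta> \<subseteq> V"
    using \<open>ball z\<^sub>0 \<epsilon> \<subseteq> V\<close> by blast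
  obtain W where "open W" and W: "\<psi> ` ball z\<^sub>0 \<delta> = M \<inter> W"
    using local_param_image_open[OF lp open_ball \<open>ball z\<^sub>0 \<delta> \<subseteq> V\<close>] by blast
  have "emeasure Vol (M \<inter> W) \<le> ennreal (5/4) * emeasure lborel (ball z\<^sub>0 \<delta>)"
    unfolding W[symmetric] using J \<open>ball z\<^sub>0 \<delta> \<subseteq> ball z\<^sub>0 \<epsilon>\<close>
    by (intro emeasure_local_param_image_le[OF Vol lp open_ball \<open>ball z\<^sub>0 \<delta> \<subseteq> V\<close>]) blast
  also have "\<dots> < \<infinity>"
    using emeasure_lborel_ball_finite[of z\<^sub>0 \<delta>] by (simp add: ennreal_mult_less_top)
  finally have "emeasure Vol (M \<inter> W) < \<infinity>" .
  moreover have "lower_volume_growth Vol (M \<inter> W) (unit_ball_volume TYPE('m) / 2) CARD('m) \<delta>"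
    unfolding lower_volume_growth_def space_volume_measure[OF Vol]
  proof (intro ballI allI impI)
    fix x \<rho>
    assume "x \<in> M \<inter> W" and \<rho>: "0 < \<rho> \<and> \<rho> \<le> \<delta>"
    then obtain w where "w \<in> ball z\<^sub>0 (\<epsilon> / 2)" and "x = \<psi> w"
      unfolding W[symmetric] \<delta>_def by blast
    moreover have "0 < \<rho>" "\<rho> \<le> \<epsilon> / 2"
      using \<rho> unfolding \<delta>_def by simp_all
    ultimately show "ennreal (unit_ball_volume TYPE('m) / 2 * \<rho> ^ CARD('m)) \<le> emeasure Vol (M \<inter> cball x \<rho>)"
      using local_param_cball_volume_ge[OF Vol lp \<open>ball z\<^sub>0 \<epsilon> \<subseteq> V\<close> lip J_ge \<kappa>_def] by simp
  qed
  moreover have "\<psi> z\<^sub>0 \<in> W"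
  proof -
    have "\<psi> z\<^sub>0 \<in> \<psi> ` ball z\<^sub>0 \<delta>"
      using \<open>0 < \<delta>\<close> by simp
    then show ?thesis
      unfolding W by blast
  qed
  ultimately show thesis
    using that \<open>0 < \<delta>\<close> \<open>open W\<close> by blast
qed

lemma submanifold_local_volume_growth:
  fixes M :: "(real^'n) set"
  assumes mfd: "smooth_submanifold M TYPE('m::finite)" and Vol: "is_volume_measure M TYPE('m) Vol" and "p \<in> M"
  obtains \<delta> W where "0 < \<delta>" "open W" "p \<in> W" "emeasure Vol (M \<inter> W) < \<infinity>"
    "lower_volume_growth Vol (M \<inter> W) (unit_ball_volume TYPE('m) / 2) CARD('m) \<delta>"
proof -
  obtain V :: "(real^'m) set" and \<phi> where lp: "local_param M V \<phi>" and "p \<in> \<phi> ` V"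
    using mfd \<open>p \<in> M\<close> unfolding smooth_submanifold_def by blast
  then obtain v where "v \<in> V" "p = \<phi> v"
    by blast
  obtain V' :: "(real^'m) set" and \<psi> where lp': "local_param M V' \<psi>" and "0 \<in> V'" "\<psi> 0 = \<phi> v"
    and iso: "\<And>h. norm (frechet_derivative \<psi> (at 0) h) = norm h"
    using local_param_isometric_at[OF lp \<open>v \<in> V\<close>] by blast
  then have "\<psi> 0 = p"
    using \<open>p = \<phi> v\<close> by simp
  show thesis
    by (rule local_param_volume_growth[OF Vol lp' \<open>0 \<in> V'\<close> iso, unfolded \<open>\<psi> 0 = p\<close>], rule that)
qed

lemma compact_submanifold_volume_growth:
  fixes M :: "(real^'n) set"
  assumes "compact M" and mfd: "smooth_submanifold M TYPE('m::finite)" and Vol: "is_volume_measure M TYPE('m) Vol"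
  obtains r where "0 < r" "emeasure Vol M < \<infinity>"
    "lower_volume_growth Vol M (unit_ball_volume TYPE('m) / 2) CARD('m) r"
proof -
  define admissible where "admissible p \<delta> W \<longleftrightarrow> 0 < \<delta> \<and> open W \<and> p \<in> W \<and> emeasure Vol (M \<inter> W) < \<infinity> \<and>
    lower_volume_growth Vol (M \<inter> W) (unit_ball_volume TYPE('m) / 2) CARD('m) \<delta>" for p \<delta> W
  have "\<exists>\<delta> W. admissible p \<delta> W" if "p \<in> M" for p
    using submanifold_local_volume_growth[OF mfd Vol that] unfolding admissible_def by blast
  then obtain \<delta> W where local: "\<And>p. p \<in> M \<Longrightarrow> admissible p (\<delta> p) (W p)"
    by metis
  obtain F where "F \<subseteq> M" "finite F" and cover: "M \<subseteq> (\<Union>p\<in>F. W p)"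
    using compactE_image[OF \<open>compact M\<close>, of M W] local unfolding admissible_def by blast
  define r where "r = Min (insert 1 (\<delta> ` F))"
  have "0 < r"
    unfolding r_def using \<open>finite F\<close> \<open>F \<subseteq> M\<close> local by (subst Min_gr_iff) (auto simp: admissible_def)
  have r_le: "r \<le> \<delta> p" if "p \<in> F" for p
    unfolding r_def using \<open>finite F\<close> that by simp
  have sets_W: "M \<inter> W p \<in> sets Vol" if "p \<in> F" for p
    using sets_volume_measure[OF Vol borel_open] local that \<open>F \<subseteq> M\<close> unfolding admissible_def by blast
  have "(\<Union>p\<in>F. M \<inter> W p) \<in> sets Vol"
    using sets_W by (rule sets.finite_UN[OF \<open>finite F\<close>])
  then have "emeasure Vol M \<le> emeasure Vol (\<Union>p\<in>F. M \<inter> W p)"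
    by (rule emeasure_mono[rotated]) (use cover in blast)
  also have "\<dots> \<le> (\<Sum>p\<in>F. emeasure Vol (M \<inter> W p))"
    using sets_W \<open>finite F\<close> by (intro emeasure_subadditive_finite) auto
  also have "\<dots> < \<infinity>"
    using local \<open>F \<subseteq> M\<close> \<open>finite F\<close> by (auto simp: admissible_def)
  finally have "emeasure Vol M < \<infinity>" .
  moreover have "lower_volume_growth Vol M (unit_ball_volume TYPE('m) / 2) CARD('m) r"
    unfolding lower_volume_growth_def
  proof (intro ballI allI impI)
    fix x \<rho>
    assume "x \<in> M" and "0 < \<rho> \<and> \<rho> \<le> r"
    then obtain p where "p \<in> F" "x \<in> W p"
      using cover by blast
    then show "ennreal (unit_ball_volume TYPE('m) / 2 * \<rho> ^ CARD('m)) \<le> emeasure Vol (space Vol \<inter> cball x \<rho>)"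
      using local[of p] \<open>F \<subseteq> M\<close> \<open>x \<in> M\<close> \<open>0 < \<rho> \<and> \<rho> \<le> r\<close> r_le[OF \<open>p \<in> F\<close>]
      unfolding admissible_def lower_volume_growth_def by force
  qed
  ultimately show thesis
    using that \<open>0 < r\<close> by blast
qed

theorem mainTheorem9:
  fixes M :: "(real^'n) set" and Vol :: "(real^'n) measure"
  assumes Y_fin: "\<exists>B. finite B \<and> span B = (UNIV :: 'y::real_normed_vector set)"
    and M_sub: "M \<subseteq> {x. \<forall>i. 0 \<le> x $ i \<and> x $ i \<le> 1}"
    and M_ne: "M \<noteq> {}"
    and M_cpt: "compact M"
    and M_mfd: "smooth_submanifold M TYPE('m::finite)"
    and Vol: "is_volume_measure M TYPE('m) Vol"
  shows "\<exists>r>0. \<forall>(u :: real^'n \<Rightarrow> 'y) L.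
           L-lipschitz_on {x. \<forall>i. 0 \<le> x $ i \<and> x $ i \<le> 1} u \<longrightarrow>
           (let Sinf = (SUP x\<in>M. norm (u x));
                L2sq = (\<integral>x. (norm (u x))\<^sup>2 \<partial>Vol);
                m = CARD('m)
            in (Sinf \<le> L * r \<longrightarrow>
                  Sinf ^ (m + 2) \<le> real ((m + 2) * (m + 1)) / unit_ball_volume TYPE('m) * L ^ m * L2sq)
             \<and> (Sinf \<ge> L * r \<longrightarrow>
                  Sinf\<^sup>2 \<le> 2 ^ (m + 1) * real (m + 1) / (unit_ball_volume TYPE('m) * r ^ m) * L2sq))"
proof -
  have "0 < unit_ball_volume TYPE('m)"
    unfolding unit_ball_volume_def using content_ball_pos[of 1 "0::real^'m"] by simp
  obtain r where "0 < r" and "emeasure Vol M < \<infinity>"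
    and growth: "lower_volume_growth Vol M (unit_ball_volume TYPE('m) / 2) CARD('m) r"
    using compact_submanifold_volume_growth[OF M_cpt M_mfd Vol] by blast
  have sets: "sets Vol = sets (restrict_space borel M)"
    using Vol unfolding is_volume_measure_def by blast
  have "finite_measure Vol"
    using \<open>emeasure Vol M < \<infinity>\<close> sets_eq_imp_space_eq[OF sets]
    by (intro finite_measureI) (simp add: space_restrict_space)
  note bounds = Sup_norm_le_L2_norm_cases[OF \<open>finite_measure Vol\<close> sets M_cpt M_ne growth
      \<open>0 < unit_ball_volume TYPE('m)\<close> zero_less_card_finite \<open>0 < r\<close> lipschitz_on_subset[OF _ M_sub]]
  show ?thesis
    unfolding Let_def using \<open>0 < r\<close> bounds by blast
qed

end
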